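(* Let $\mathscr{X}$ be a totally bounded normed metric space, consider a channel with transition mapping $N$ as described in the context, and let $0\le\delta<m_{\mathscr{Y}}(V_N)$. Then $$C^\delta_N=\sup\Big\{ I_{\tilde\delta/|[\![X]\!]|}(Y;X)\ :\ \tilde\delta\ge0,\ X\in\mathscr{F}_{\tilde\delta},\ \tilde\delta\le \delta/m_{\mathscr{Y}}([\![Y]\!])\Big\}\ \text{bits},$$ where $Y$ is the received UV corresponding to the transmitted UV $X$.
   Context: Uncertain variables (UVs): a UV is a map $U$ from a sample space $\Omega$ to a set; jointly considered UVs share $\Omega$. $[\![U]\!]=\{U(\omega)\}$; $[\![U|w]\!]=\{U(\omega):W(\omega)=w\}$, $[\![U|W]\!]=\{[\![U|w]\!]:w\in[\![W]\!]\}$. An uncertainty function on a set $\mathscr{U}$ is a map $m$ on subsets of $\mathscr{U}$ with $m(\emptyset)=0$, $0<m(S)<\infty$ for nonempty $S$, $\max\{m(S_1),m(S_2)\}\le m(S_1\cup S_2)$. Association: with uncertainty functions $m_{\mathscr{X}},m_{\mathscr{Y}}$ on the value sets of $X,Y$, $\mathscr{A}(X;Y)=\{m_{\mathscr{X}}([\![X|y_1]\!]\cap[\![X|y_2]\!])/m_{\mathscr{X}}([\![X]\!]):y_1\ne y_2\in[\![Y]\!]\}\setminus\{0\}$, $\mathscr{A}(Y;X)=\{m_{\mathscr{Y}}([\![Y|x_1]\!]\cap[\![Y|x_2]\!])/m_{\mathscr{Y}}([\![Y]\!]):x_1\ne x_2\in[\![X]\!]\}\setminus\{0\}$. $\mathscr{A}\succ\delta$: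 all elements $>\delta$ (false for $\emptyset$); $\mathscr{A}\preceq\delta$: all elements $\le\delta$ (true for $\emptyset$). $(X,Y)\stackrel{d}{\leftrightarrow}(\delta_1,\delta_2)$ iff $\mathscr{A}(X;Y)\succ\delta_1,\mathscr{A}(Y;X)\succ\delta_2$; $(X,Y)\stackrel{a}{\leftrightarrow}(\delta_1,\delta_2)$ iff $\mathscr{A}(X;Y)\preceq\delta_1,\mathscr{A}(Y;X)\preceq\delta_2$. $\delta$-mutual information: for UVs $U$ (values in $\mathscr{U}$ with uncertainty function $m_{\mathscr{U}}$) and $W$, points $u,u'\in[\![U]\!]$ are $\delta$-connected via $[\![U|W]\!]$ if there are $w_1,\dots,w_N\in[\![W]\!]$ with $u\in[\![U|w_1]\!]$, $u'\in[\![U|w_N]\!]$, $m_{\mathscr{U}}([\![U|w_i]\!]\cap[\![U|w_{i-1}]\!])/m_{\mathscr{U}}([\![U]\!])>\delta$ for $1<i\le N$; a set is $\delta$-connected if all pairs of its points are. A $\delta$-overlap family $[\![U|W]\!]^*_\delta$ is a family of distinct subsets covering $[\![U]\!]$, of largest cardinality among covering families such that (i) each member is $\delta$-connected and contains some $[\![U|w]\!]$; (ii) distinct members $S_1,S_2$ satisfy $m_{\mathscr{U}}(S_1\cap S_2)\le\delta\, m_{\mathscr{U}}([\![U]\!])$; (iii) each $[\![U|w]\!]$ lies in some member. $I_\delta(U;W)=\log_2|[\![U|W]\!]^*_\delta|$ if such a family exists, else $0$. Channel: $\mathscr{Y}$ is the output set, $N$ maps each $x\in\mathscr{X}$ to a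 set $N(x)\subseteq\mathscr{Y}$ (the possible received points, $S_N(x)=N(x)$); $m_{\mathscr{X}},m_{\mathscr{Y}}$ are uncertainty functions on $\mathscr{X},\mathscr{Y}$ with $m_{\mathscr{Y}}(\mathscr{Y})=1$. $V_N=N(x^* )$ where $x^*$ minimizes $m_{\mathscr{Y}}(N(x))$ over $\mathscr{X}$. A codebook is a discrete set $\mathcal{C}\subseteq\mathscr{X}$; $e_N(x_1,x_2)=m_{\mathscr{Y}}(N(x_1)\cap N(x_2))/m_{\mathscr{Y}}(\mathscr{Y})$; $\mathcal{C}$ is $(N,\delta)$-distinguishable if $e_N(x_1,x_2)\le\delta/|\mathcal{C}|$ for all distinct $x_1,x_2\in\mathcal{C}$; $C^\delta_N=\sup\log_2|\mathcal{C}|$ over $(N,\delta)$-distinguishable codebooks. For a codebook $\mathcal{C}$, the transmitted UV $X$ and received UV $Y$ satisfy $[\![X]\!]=\mathcal{C}$, $[\![Y]\!]=\bigcup_{x\in\mathcal{C}}N(x)$, $[\![Y|x]\!]=\{y\in[\![Y]\!]:y\in N(x)\}$, $[\![X|y]\!]=\{x\in[\![X]\!]:y\in N(x)\}$. Feasible set: $\mathscr{F}_\delta$ is the set of transmitted UVs $X$ with $[\![X]\!]\subseteq\mathscr{X}$ a codebook such that either $(X,Y)\stackrel{d}{\leftrightarrow}(0,\delta/|[\![X]\!]|)$ or $(X,Y)\stackrel{a}{\leftrightarrow}(1,\delta/|[\![X]\!]|)$. *)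

theory Defs
  imports "HOL-Analysis.Analysis"
begin

definition uncertainty_fun :: "'a set \<Rightarrow> ('a set \<Rightarrow> real) \<Rightarrow> bool" where
  "uncertainty_fun U m \<longleftrightarrow>
     m {} = 0 \<and>
     (\<forall>S. S \<subseteq> U \<and> S \<noteq> {} \<longrightarrow> 0 < m S) \<and>
     (\<forall>S1 S2. S1 \<subseteq> U \<and> S2 \<subseteq> U \<longrightarrow> max (m S1) (m S2) \<le> m (S1 \<union> S2))"

text \<open>A codebook is a discrete (here: finite, nonempty) subset of the input space.\<close>
definition codebook :: "'a set \<Rightarrow> 'a set \<Rightarrow> bool" where
  "codebook Xs C \<longleftrightarrow> C \<subseteq> Xs \<and> finite C \<and> C \<noteq> {}"

text \<open>Range of the received UV: [[Y]] = union of N x over the codebook.\<close>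
definition Yrange :: "('a \<Rightarrow> 'b set) \<Rightarrow> 'a set \<Rightarrow> 'b set" where
  "Yrange N C = (\<Union>x\<in>C. N x)"

definition YgX :: "('a \<Rightarrow> 'b set) \<Rightarrow> 'a set \<Rightarrow> 'a \<Rightarrow> 'b set" where
  "YgX N C x = {y \<in> Yrange N C. y \<in> N x}"

definition XgY :: "('a \<Rightarrow> 'b set) \<Rightarrow> 'a set \<Rightarrow> 'b \<Rightarrow> 'a set" where
  "XgY N C y = {x \<in> C. y \<in> N x}"

definition assoc_XY :: "('a set \<Rightarrow> real) \<Rightarrow> ('a \<Rightarrow> 'b set) \<Rightarrow> 'a set \<Rightarrow> real set" where
  "assoc_XY mX N C =
     {mX (XgY N C y1 \<inter> XgY N C y2) / mX C | y1 y2.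
        y1 \<in> Yrange N C \<and> y2 \<in> Yrange N C \<and> y1 \<noteq> y2} - {0}"

definition assoc_YX :: "('b set \<Rightarrow> real) \<Rightarrow> ('a \<Rightarrow> 'b set) \<Rightarrow> 'a set \<Rightarrow> real set" where
  "assoc_YX mY N C =
     {mY (YgX N C x1 \<inter> YgX N C x2) / mY (Yrange N C) | x1 x2.
        x1 \<in> C \<and> x2 \<in> C \<and> x1 \<noteq> x2} - {0}"

definition set_succ :: "real set \<Rightarrow> real \<Rightarrow> bool" where
  "set_succ A d \<longleftrightarrow> A \<noteq> {} \<and> (\<forall>a\<in>A. a > d)"

definition set_preceq :: "real set \<Rightarrow> real \<Rightarrow> bool" where
  "set_preceq A d \<longleftrightarrow> (\<forall>a\<in>A. a \<le> d)"

definition disassoc :: "('a set \<Rightarrow> real) \<Rightarrow> ('b set \<Rightarrow> real) \<Rightarrow> ('a \<Rightarrow> 'b set) \<Rightarrow> 'a set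
    \<Rightarrow> real \<Rightarrow> real \<Rightarrow> bool" where
  "disassoc mX mY N C d1 d2 \<longleftrightarrow> set_succ (assoc_XY mX N C) d1 \<and> set_succ (assoc_YX mY N C) d2"

definition assoc :: "('a set \<Rightarrow> real) \<Rightarrow> ('b set \<Rightarrow> real) \<Rightarrow> ('a \<Rightarrow> 'b set) \<Rightarrow> 'a set
    \<Rightarrow> real \<Rightarrow> real \<Rightarrow> bool" where
  "assoc mX mY N C d1 d2 \<longleftrightarrow> set_preceq (assoc_XY mX N C) d1 \<and> set_preceq (assoc_YX mY N C) d2"

text \<open>Feasible set F_delta, described through the range [[X]] = C of the transmitted UV.\<close>
definition feasible :: "'a set \<Rightarrow> ('a set \<Rightarrow> real) \<Rightarrow> ('b set \<Rightarrow> real) \<Rightarrow> ('a \<Rightarrow> 'b set)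
    \<Rightarrow> real \<Rightarrow> 'a set \<Rightarrow> bool" where
  "feasible Xs mX mY N d C \<longleftrightarrow> codebook Xs C \<and>
     (disassoc mX mY N C 0 (d / real (card C)) \<or> assoc mX mY N C 1 (d / real (card C)))"

text \<open>Generic: U has range R with uncertainty function m; W has range Ws;
  cond w = [[U|w]].\<close>
definition delta_conn_pts :: "('u set \<Rightarrow> real) \<Rightarrow> 'u set \<Rightarrow> 'w set \<Rightarrow> ('w \<Rightarrow> 'u set)
    \<Rightarrow> real \<Rightarrow> 'u \<Rightarrow> 'u \<Rightarrow> bool" where
  "delta_conn_pts m R Ws cond d u u' \<longleftrightarrow>
     (\<exists>ws. ws \<noteq> [] \<and> set ws \<subseteq> Ws \<and> u \<in> cond (hd ws) \<and> u' \<in> cond (last ws) \<and>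
        (\<forall>i. 0 < i \<and> i < length ws \<longrightarrow>
           m (cond (ws ! i) \<inter> cond (ws ! (i - 1))) / m R > d))"

definition delta_conn_set :: "('u set \<Rightarrow> real) \<Rightarrow> 'u set \<Rightarrow> 'w set \<Rightarrow> ('w \<Rightarrow> 'u set)
    \<Rightarrow> real \<Rightarrow> 'u set \<Rightarrow> bool" where
  "delta_conn_set m R Ws cond d S \<longleftrightarrow> (\<forall>u\<in>S. \<forall>u'\<in>S. delta_conn_pts m R Ws cond d u u')"

definition admissible_family :: "('u set \<Rightarrow> real) \<Rightarrow> 'u set \<Rightarrow> 'w set \<Rightarrow> ('w \<Rightarrow> 'u set)
    \<Rightarrow> real \<Rightarrow> 'u set set \<Rightarrow> bool" where
  "admissible_family m R Ws cond d F \<longleftrightarrow>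
     finite F \<and> (\<forall>S\<in>F. S \<subseteq> R) \<and> \<Union>F = R \<and>
     (\<forall>S\<in>F. delta_conn_set m R Ws cond d S \<and> (\<exists>w\<in>Ws. cond w \<subseteq> S)) \<and>
     (\<forall>S1\<in>F. \<forall>S2\<in>F. S1 \<noteq> S2 \<longrightarrow> m (S1 \<inter> S2) \<le> d * m R) \<and>
     (\<forall>w\<in>Ws. \<exists>S\<in>F. cond w \<subseteq> S)"

definition overlap_family :: "('u set \<Rightarrow> real) \<Rightarrow> 'u set \<Rightarrow> 'w set \<Rightarrow> ('w \<Rightarrow> 'u set)
    \<Rightarrow> real \<Rightarrow> 'u set set \<Rightarrow> bool" where
  "overlap_family m R Ws cond d F \<longleftrightarrow> admissible_family m R Ws cond d F \<and>
     (\<forall>F'. admissible_family m R Ws cond d F' \<longrightarrow> card F' \<le> card F)"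

definition delta_MI :: "('u set \<Rightarrow> real) \<Rightarrow> 'u set \<Rightarrow> 'w set \<Rightarrow> ('w \<Rightarrow> 'u set)
    \<Rightarrow> real \<Rightarrow> real" where
  "delta_MI m R Ws cond d =
     (if \<exists>F. overlap_family m R Ws cond d F
      then log 2 (real (card (SOME F. overlap_family m R Ws cond d F))) else 0)"

definition MI_YX :: "('b set \<Rightarrow> real) \<Rightarrow> ('a \<Rightarrow> 'b set) \<Rightarrow> 'a set \<Rightarrow> real \<Rightarrow> real" where
  "MI_YX mY N C d = delta_MI mY (Yrange N C) C (YgX N C) d"

definition e_N :: "('b set \<Rightarrow> real) \<Rightarrow> 'b set \<Rightarrow> ('a \<Rightarrow> 'b set) \<Rightarrow> 'a \<Rightarrow> 'a \<Rightarrow> real" where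
  "e_N mY Ys N x1 x2 = mY (N x1 \<inter> N x2) / mY Ys"

definition distinguishable :: "'a set \<Rightarrow> ('b set \<Rightarrow> real) \<Rightarrow> 'b set \<Rightarrow> ('a \<Rightarrow> 'b set)
    \<Rightarrow> real \<Rightarrow> 'a set \<Rightarrow> bool" where
  "distinguishable Xs mY Ys N d C \<longleftrightarrow> codebook Xs C \<and>
     (\<forall>x1\<in>C. \<forall>x2\<in>C. x1 \<noteq> x2 \<longrightarrow> e_N mY Ys N x1 x2 \<le> d / real (card C))"

definition capacity :: "'a set \<Rightarrow> ('b set \<Rightarrow> real) \<Rightarrow> 'b set \<Rightarrow> ('a \<Rightarrow> 'b set) \<Rightarrow> real \<Rightarrow> ereal" where
  "capacity Xs mY Ys N d =
     Sup ((\<lambda>C. ereal (log 2 (real (card C)))) ` {C. distinguishable Xs mY Ys N d C})"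

end

theory Submission
  imports Defs
begin

text \<open>Both sides are governed by the fact that a set of uncertainty at most \<delta> < m(V_N) cannot
  contain any N x. For a distinguishable codebook C the sets N x (x \<in> C) therefore form an
  overlap family at level \<delta> / (m[[Y]] |C|), giving I = log |C|, and C is feasible in the
  associated sense. Conversely every member of an admissible family for a feasible codebook
  contains some N x, and the x chosen this way are distinct and pairwise distinguishable, so
  they form a distinguishable codebook as large as the family.\<close>

lemma uncertainty_fun_mono:
  assumes "uncertainty_fun U m" "A \<subseteq> B" "B \<subseteq> U"
  shows "m A \<le> m B"
proof -
  have "max (m A) (m B) \<le> m (A \<union> B)"
    using assms(1,2,3) unfolding uncertainty_fun_def by blast
  with assms(2) show ?thesis by (simp add: sup_absorb2)
qed

lemma uncertainty_fun_pos:
  "uncertainty_fun U m \<Longrightarrow> S \<subseteq> U \<Longrightarrow> S \<noteq> {} \<Longrightarrow> 0 < m S"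
  unfolding uncertainty_fun_def by blast

lemma YgX_eq: "x \<in> C \<Longrightarrow> YgX N C x = N x"
  by (auto simp: YgX_def Yrange_def)

lemma set_preceq_assoc_XY_1:
  assumes "uncertainty_fun Xs mX" "codebook Xs C"
  shows "set_preceq (assoc_XY mX N C) 1"
  unfolding set_preceq_def
proof
  fix a assume "a \<in> assoc_XY mX N C"
  then obtain y1 y2 where a: "a = mX (XgY N C y1 \<inter> XgY N C y2) / mX C"
    by (auto simp: assoc_XY_def)
  have "mX (XgY N C y1 \<inter> XgY N C y2) \<le> mX C"
    using assms by (intro uncertainty_fun_mono[OF assms(1)]) (auto simp: XgY_def codebook_def)
  moreover have "0 < mX C"
    using assms by (intro uncertainty_fun_pos[OF assms(1)]) (auto simp: codebook_def)
  ultimately show "a \<le> 1" using a by simp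
qed

lemma delta_MI_overlap_family:
  assumes "overlap_family m R Ws cond d F"
  shows "delta_MI m R Ws cond d = log 2 (real (card F))"
proof -
  define F' where "F' = (SOME F. overlap_family m R Ws cond d F)"
  have "overlap_family m R Ws cond d F'"
    unfolding F'_def using assms by (rule someI)
  with assms have "card F' = card F"
    unfolding overlap_family_def by (simp add: le_antisym)
  with assms show ?thesis
    unfolding delta_MI_def F'_def by auto
qed

lemma delta_MI_cases:
  obtains "delta_MI m R Ws cond d = 0"
  | F where "admissible_family m R Ws cond d F" "delta_MI m R Ws cond d = log 2 (real (card F))"
proof (cases "\<exists>F. overlap_family m R Ws cond d F")
  case True
  then obtain F where "overlap_family m R Ws cond d F" ..
  then show ?thesis
    using that(2) delta_MI_overlap_family unfolding overlap_family_def by blast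
next
  case False
  then have "delta_MI m R Ws cond d = 0" unfolding delta_MI_def by (rule if_not_P)
  then show ?thesis by (rule that(1))
qed

lemma capacity_ge_distinguishable:
  "distinguishable Xs mY Ys N d C \<Longrightarrow> ereal (log 2 (real (card C))) \<le> capacity Xs mY Ys N d"
  unfolding capacity_def by (auto intro!: SUP_upper)

locale channel =
  fixes Xs :: "'a set" and Ys :: "'b set" and N :: "'a \<Rightarrow> 'b set"
    and mY :: "'b set \<Rightarrow> real" and xstar :: 'a and \<delta> :: real
  assumes N_subset: "\<And>x. x \<in> Xs \<Longrightarrow> N x \<subseteq> Ys"
    and uncertainty_fun_Y: "uncertainty_fun Ys mY"
    and mY_Ys: "mY Ys = 1"
    and xstar_in: "xstar \<in> Xs"
    and xstar_min: "\<And>x. x \<in> Xs \<Longrightarrow> mY (N xstar) \<le> mY (N x)"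
    and delta_nonneg: "0 \<le> \<delta>"
    and delta_less: "\<delta> < mY (N xstar)"
begin

lemma Yrange_subset: "C \<subseteq> Xs \<Longrightarrow> Yrange N C \<subseteq> Ys"
  using N_subset by (auto simp: Yrange_def)

lemma N_not_subset_small:
  assumes "x \<in> Xs" "S \<subseteq> Ys" "mY S \<le> \<delta>"
  shows "\<not> N x \<subseteq> S"
proof
  assume "N x \<subseteq> S"
  then have "mY (N x) \<le> mY S"
    using assms(2) uncertainty_fun_Y by (intro uncertainty_fun_mono)
  with assms xstar_min[of x] delta_less show False by simp
qed

lemma N_nonempty: "x \<in> Xs \<Longrightarrow> N x \<noteq> {}"
  using N_not_subset_small[of x "{}"] uncertainty_fun_Y delta_nonneg
  by (auto simp: uncertainty_fun_def)

lemma Yrange_pos: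
  assumes "codebook Xs C"
  shows "0 < mY (Yrange N C)"
proof -
  from assms obtain x where x: "x \<in> C" and CX: "C \<subseteq> Xs" by (auto simp: codebook_def)
  then have "N x \<noteq> {}" "N x \<subseteq> Yrange N C" using N_nonempty by (auto simp: Yrange_def)
  then show ?thesis
    using uncertainty_fun_Y Yrange_subset[OF CX] uncertainty_fun_pos by blast
qed

lemma delta_div_card_le:
  assumes "codebook Xs C"
  shows "\<delta> / real (card C) \<le> \<delta>"
proof -
  have "1 \<le> real (card C)" using assms by (auto simp: codebook_def Suc_le_eq card_gt_0_iff)
  then show ?thesis using mult_left_mono[of 1 "real (card C)" \<delta>] delta_nonneg by (simp add: divide_le_eq)
qed

lemma capacity_nonneg: "0 \<le> capacity Xs mY Ys N \<delta>"
proof -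
  have "distinguishable Xs mY Ys N \<delta> {xstar}"
    using xstar_in by (simp add: distinguishable_def codebook_def)
  from capacity_ge_distinguishable[OF this] show ?thesis by (simp add: zero_ereal_def)
qed

text \<open>Two distinct members of the family overlap in uncertainty at most \<delta>, too little to
  contain a common N x, so the chosen codewords are distinct.\<close>

lemma admissible_family_codewords:
  assumes cb: "codebook Xs C" and dd: "d * mY (Yrange N C) \<le> \<delta> / real (card C)"
    and adm: "admissible_family mY (Yrange N C) C (YgX N C) d F"
  obtains g where "inj_on g F" "g ` F \<subseteq> C" "\<And>S. S \<in> F \<Longrightarrow> N (g S) \<subseteq> S"
proof -
  have CX: "C \<subseteq> Xs" using cb by (simp add: codebook_def)
  have FR: "\<And>S. S \<in> F \<Longrightarrow> S \<subseteq> Yrange N C"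
    and ov: "\<And>S1 S2. S1 \<in> F \<Longrightarrow> S2 \<in> F \<Longrightarrow> S1 \<noteq> S2 \<Longrightarrow> mY (S1 \<inter> S2) \<le> d * mY (Yrange N C)"
    and "\<forall>S\<in>F. \<exists>w\<in>C. YgX N C w \<subseteq> S"
    using adm by (simp_all add: admissible_family_def)
  then obtain g where g_in: "\<And>S. S \<in> F \<Longrightarrow> g S \<in> C \<and> YgX N C (g S) \<subseteq> S"
    by metis
  have g: "g S \<in> C" "N (g S) \<subseteq> S" if "S \<in> F" for S
    using g_in[OF that] YgX_eq[of "g S" C N] by simp_all
  have "inj_on g F"
  proof (rule inj_onI, rule ccontr)
    fix S1 S2 assume S: "S1 \<in> F" "S2 \<in> F" "g S1 = g S2" "S1 \<noteq> S2"
    have "S1 \<inter> S2 \<subseteq> Ys" using FR[OF S(1)] Yrange_subset[OF CX] by blast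
    moreover have "mY (S1 \<inter> S2) \<le> \<delta>"
      using ov[OF S(1,2,4)] dd delta_div_card_le[OF cb] by linarith
    moreover have "N (g S1) \<subseteq> S1 \<inter> S2" using g(2)[OF S(1)] g(2)[OF S(2)] S(3) by simp
    moreover have "g S1 \<in> Xs" using g(1)[OF S(1)] CX by blast
    ultimately show False using N_not_subset_small by blast
  qed
  moreover have "g ` F \<subseteq> C" using g(1) by blast
  ultimately show ?thesis using that g(2) by blast
qed

lemma admissible_family_card_le_capacity:
  assumes cb: "codebook Xs C" and dd: "d * mY (Yrange N C) \<le> \<delta> / real (card C)"
    and adm: "admissible_family mY (Yrange N C) C (YgX N C) d F"
  shows "ereal (log 2 (real (card F))) \<le> capacity Xs mY Ys N \<delta>"
proof (cases "F = {}")
  case True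
  then show ?thesis using capacity_nonneg by (simp add: zero_ereal_def log_def)
next
  case False
  obtain g where g: "inj_on g F" "g ` F \<subseteq> C" "\<And>S. S \<in> F \<Longrightarrow> N (g S) \<subseteq> S"
    using admissible_family_codewords[OF cb dd adm] by blast
  have CX: "C \<subseteq> Xs" and fC: "finite C" using cb by (auto simp: codebook_def)
  have fF: "finite F"
    and FR: "\<And>S. S \<in> F \<Longrightarrow> S \<subseteq> Yrange N C"
    and ov: "\<And>S1 S2. S1 \<in> F \<Longrightarrow> S2 \<in> F \<Longrightarrow> S1 \<noteq> S2 \<Longrightarrow> mY (S1 \<inter> S2) \<le> d * mY (Yrange N C)"
    using adm by (simp_all add: admissible_family_def)
  have card_eq: "card (g ` F) = card F" using g(1) by (rule card_image)
  have cb': "codebook Xs (g ` F)" using g(2) CX fF False by (auto simp: codebook_def)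
  have "\<delta> / real (card C) \<le> \<delta> / real (card (g ` F))"
    using card_mono[OF fC g(2)] cb' delta_nonneg by (intro frac_le) (auto simp: codebook_def)
  have "distinguishable Xs mY Ys N \<delta> (g ` F)"
    unfolding distinguishable_def
  proof (intro conjI ballI impI cb')
    fix x1 x2 assume "x1 \<in> g ` F" "x2 \<in> g ` F" "x1 \<noteq> x2"
    then obtain S1 S2 where S: "S1 \<in> F" "S2 \<in> F" "S1 \<noteq> S2" "x1 = g S1" "x2 = g S2" by blast
    have "N x1 \<inter> N x2 \<subseteq> S1 \<inter> S2" using S g(3) by blast
    moreover have "S1 \<inter> S2 \<subseteq> Ys" using FR[OF S(1)] Yrange_subset[OF CX] by blast
    ultimately have "mY (N x1 \<inter> N x2) \<le> mY (S1 \<inter> S2)"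
      using uncertainty_fun_Y by (intro uncertainty_fun_mono)
    also have "\<dots> \<le> d * mY (Yrange N C)" using ov[OF S(1-3)] .
    finally show "e_N mY Ys N x1 x2 \<le> \<delta> / real (card (g ` F))"
      using dd \<open>\<delta> / real (card C) \<le> _\<close> by (simp add: e_N_def mY_Ys)
  qed
  from capacity_ge_distinguishable[OF this] card_eq show ?thesis by simp
qed

lemma MI_YX_le_capacity:
  assumes cb: "codebook Xs C" and dd: "d * mY (Yrange N C) \<le> \<delta> / real (card C)"
  shows "ereal (MI_YX mY N C d) \<le> capacity Xs mY Ys N \<delta>"
proof (cases rule: delta_MI_cases[of mY "Yrange N C" C "YgX N C" d])
  case 1
  then show ?thesis using capacity_nonneg by (simp add: MI_YX_def zero_ereal_def)
next
  case (2 F)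
  then show ?thesis using admissible_family_card_le_capacity[OF cb dd] by (simp add: MI_YX_def)
qed

lemma distinguishable_overlap:
  "distinguishable Xs mY Ys N \<delta> C \<Longrightarrow> x1 \<in> C \<Longrightarrow> x2 \<in> C \<Longrightarrow> x1 \<noteq> x2
    \<Longrightarrow> mY (N x1 \<inter> N x2) \<le> \<delta> / real (card C)"
  by (simp add: distinguishable_def e_N_def mY_Ys)

lemma distinguishable_feasible:
  assumes "uncertainty_fun Xs mX" and dist: "distinguishable Xs mY Ys N \<delta> C"
  shows "feasible Xs mX mY N (\<delta> / mY (Yrange N C)) C"
proof -
  have cb: "codebook Xs C" using dist by (simp add: distinguishable_def)
  have "set_preceq (assoc_YX mY N C) (\<delta> / mY (Yrange N C) / real (card C))"
    unfolding set_preceq_def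
  proof
    fix a assume "a \<in> assoc_YX mY N C"
    then obtain x1 x2 where x: "x1 \<in> C" "x2 \<in> C" "x1 \<noteq> x2"
      and a: "a = mY (N x1 \<inter> N x2) / mY (Yrange N C)"
      by (auto simp: assoc_YX_def YgX_eq)
    show "a \<le> \<delta> / mY (Yrange N C) / real (card C)"
      using divide_right_mono[OF distinguishable_overlap[OF dist x], of "mY (Yrange N C)"]
        Yrange_pos[OF cb] a by (simp add: mult.commute)
  qed
  with cb show ?thesis
    by (simp add: feasible_def assoc_def set_preceq_assoc_XY_1[OF assms(1) cb])
qed

lemma distinguishable_inj_on:
  assumes dist: "distinguishable Xs mY Ys N \<delta> C"
  shows "inj_on N C"
proof (rule inj_onI, rule ccontr)
  have cb: "codebook Xs C" using dist by (simp add: distinguishable_def)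
  fix x1 x2 assume x: "x1 \<in> C" "x2 \<in> C" "N x1 = N x2" "x1 \<noteq> x2"
  then have "mY (N x1) \<le> \<delta>"
    using distinguishable_overlap[OF dist x(1,2,4)] delta_div_card_le[OF cb] by simp
  moreover have "x1 \<in> Xs" using cb x(1) by (auto simp: codebook_def)
  ultimately show False using N_not_subset_small[of x1 "N x1"] N_subset by blast
qed

text \<open>At this level the point sets N x are the finest admissible family: each is trivially
  \<delta>-connected (via the one-element chain [x]), and any admissible family injects into C.\<close>

lemma distinguishable_overlap_family:
  assumes dist: "distinguishable Xs mY Ys N \<delta> C"
  defines "d \<equiv> \<delta> / mY (Yrange N C) / real (card C)"
  shows "overlap_family mY (Yrange N C) C (YgX N C) d (N ` C)"
proof -
  have cb: "codebook Xs C" using dist by (simp add: distinguishable_def)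
  have fC: "finite C" using cb by (simp add: codebook_def)
  have dR: "d * mY (Yrange N C) = \<delta> / real (card C)"
    using Yrange_pos[OF cb] by (simp add: d_def)
  have card_eq: "card (N ` C) = card C"
    using distinguishable_inj_on[OF dist] by (rule card_image)
  have conn: "delta_conn_set mY (Yrange N C) C (YgX N C) d (N x)" if "x \<in> C" for x
    unfolding delta_conn_set_def delta_conn_pts_def
    using that YgX_eq[OF that, of N] by (intro ballI exI[of _ "[x]"]) auto
  have adm: "admissible_family mY (Yrange N C) C (YgX N C) d (N ` C)"
    unfolding admissible_family_def
  proof (intro conjI)
    show "\<forall>S1\<in>N ` C. \<forall>S2\<in>N ` C. S1 \<noteq> S2 \<longrightarrow> mY (S1 \<inter> S2) \<le> d * mY (Yrange N C)"
      unfolding dR by (force intro: distinguishable_overlap[OF dist])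
  qed (use fC conn YgX_eq[of _ C N] in \<open>auto simp: Yrange_def\<close>)
  have "card F \<le> card C" if admF: "admissible_family mY (Yrange N C) C (YgX N C) d F" for F
  proof -
    obtain g where "inj_on g F" "g ` F \<subseteq> C"
      using admissible_family_codewords[OF cb eq_refl[OF dR] admF] by metis
    then show ?thesis using card_inj_on_le fC by blast
  qed
  with adm card_eq show ?thesis unfolding overlap_family_def by simp
qed

lemma MI_YX_distinguishable:
  assumes "distinguishable Xs mY Ys N \<delta> C"
  shows "MI_YX mY N C (\<delta> / mY (Yrange N C) / real (card C)) = log 2 (real (card C))"
  using delta_MI_overlap_family[OF distinguishable_overlap_family[OF assms]]
    card_image[OF distinguishable_inj_on[OF assms]]
  by (simp add: MI_YX_def)

end

theorem theorem7:
  fixes Xs :: "'a::real_normed_vector set" and Ys :: "'b set"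
    and N :: "'a \<Rightarrow> 'b set"
    and mX :: "'a set \<Rightarrow> real" and mY :: "'b set \<Rightarrow> real"
    and xstar :: 'a and \<delta> :: real
  assumes "totally_bounded Xs"
    and "\<forall>x\<in>Xs. N x \<subseteq> Ys"
    and "uncertainty_fun Xs mX"
    and "uncertainty_fun Ys mY"
    and "mY Ys = 1"
    and "xstar \<in> Xs" and "\<forall>x\<in>Xs. mY (N xstar) \<le> mY (N x)"
    and "0 \<le> \<delta>" and "\<delta> < mY (N xstar)"
  shows "capacity Xs mY Ys N \<delta> =
    Sup {ereal (MI_YX mY N C (\<delta>' / real (card C))) | \<delta>' C.
           0 \<le> \<delta>' \<and> feasible Xs mX mY N \<delta>' C \<and> \<delta>' \<le> \<delta> / mY (Yrange N C)}"
  (is "_ = Sup ?MI")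
proof -
  interpret channel Xs Ys N mY xstar \<delta>
    using assms by unfold_locales auto
  have "ereal (log 2 (real (card C))) \<le> Sup ?MI" if dist: "distinguishable Xs mY Ys N \<delta> C" for C
  proof (rule Sup_upper2)
    have "0 < mY (Yrange N C)" using Yrange_pos dist by (simp add: distinguishable_def)
    then show "ereal (MI_YX mY N C (\<delta> / mY (Yrange N C) / real (card C))) \<in> ?MI"
      using distinguishable_feasible[OF assms(3) dist] delta_nonneg
      by (intro CollectI exI[of _ "\<delta> / mY (Yrange N C)"] exI[of _ C]) simp
  qed (use MI_YX_distinguishable[OF dist] in simp)
  moreover have "b \<le> capacity Xs mY Ys N \<delta>" if "b \<in> ?MI" for b
  proof -
    obtain \<delta>' C where b: "b = ereal (MI_YX mY N C (\<delta>' / real (card C)))"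
      and cb: "codebook Xs C" and "\<delta>' \<le> \<delta> / mY (Yrange N C)"
      using \<open>b \<in> ?MI\<close> by (auto simp: feasible_def)
    then have "\<delta>' / real (card C) * mY (Yrange N C) \<le> \<delta> / real (card C)"
      using Yrange_pos[OF cb] by (simp add: le_divide_eq divide_right_mono)
    with b show ?thesis using MI_YX_le_capacity[OF cb] by simp
  qed
  ultimately show ?thesis
    unfolding capacity_def by (intro antisym SUP_least Sup_least) auto
qed

end
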